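(* Consider the static single-object erasure-coded Byzantine read/write protocol described in the context over a set $C$ of flexnodes, at most $b<\frac{|C|-k}{3}$ of which are Byzantine. In any execution, let $\pi$ and $\omega$ be complete operations, where $\pi$ is a read or a write and $\omega$ is a write, such that $\pi$ completes before $\omega$ is invoked. If $\pi$ executes put-data$(\langle t_\pi,v_\pi\rangle)$ on $C$ and $\omega$ executes put-data$(\langle t_\omega,v_\omega\rangle)$ on $C$, then $t_\omega>t_\pi$.
   Context: Model. $C$ is a fixed finite set of processes ("flexnodes") over asynchronous reliable channels (messages between nonfaulty processes eventually delivered unaltered). Up to $b$ flexnodes may be Byzantine. Processes invoking reads/writes follow the protocol but may crash. Signatures are unforgeable. An $[n,k]$ RLNC code with $n=|C|$: $\mathrm{Encode}(v)$ produces $|C|$ coded elements, any $k$ of which (from the same encoding) recover $v$. Tags are pairs $(z,w)$, $z\in\mathbb{N}$, $w$ a writer identifier from a totally ordered set, with $(z_1,w_1)<(z_2,w_2)$ iff $z_1<z_2$, or $z_1=z_2$ and $w_1<w_2$. A parameter $\delta\ge1$ is fixed. A quorum is any subset of $C$ of size $\lceil (2|C|+k)/3\rceil$. State. Each flexnode keeps a set $List$ of signed triples $(\langle t,e\rangle,\sigma)$, initially holding the initial pair with tag $t_0$. Primitives (by flexnode $p$): get-tag: query all, each replies with its signed max-tag entry, wait for replies from a quorum, return the maximum tag among replies with valid signatures. put-data$(\langle t,v\rangle)$: encode $v$ into $e_1,\dots,e_{|C|}$, send $\langle t,e_j\rangle$ signed by $p$ to the $j$-th flexnode; a receiver adds it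 to $List$ if the signature verifies and no entry with tag $t$ exists, then if $|List|>\delta+1$ removes the entries with minimum tag, and acknowledges; $p$ waits for a quorum of acknowledgements. get-data: query all, each replies with its $List$, wait for a quorum, keep verified pairs, take the maximum tag appearing in at least $k$ received lists, decode and return it; if none exists the primitive does not complete. Operations: read = get-data then put-data of the obtained pair, returning it; write$(v)$ by writer $w$ = get-tag returning $t$, then put-data$(\langle (t.z+1,w),v\rangle)$. *)

theory Defs
  imports Complex_Main "HOL-Library.Product_Lexorder"
begin

text \<open>Flexnodes have type 'n, client processes (readers/writers) have type 'c
  (totally ordered: client identifiers are the writer identifiers), values 'v,
  coded elements 'e.  Tags are pairs (z,w) ordered lexicographically
  (Product_Lexorder).\<close>

type_synonym 'c tag = "nat \<times> 'c"

text \<open>Signatures: the signer of a signed triple.  SigInit is the signature on the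
  initial pairs.  Unforgeability is modelled by a global set of signed triples
  (field sigs of the state); a signature verifies iff the triple is in that set.
  Only clients (and the initialisation) sign.\<close>
datatype 'c signer = SigInit | SigBy 'c

type_synonym ('c,'e) entry = "(('c tag \<times> 'e) \<times> 'c signer)"

definition tag_of :: "('c,'e) entry \<Rightarrow> 'c tag" where
  "tag_of x = fst (fst x)"

datatype ('n,'c) proc = Node 'n | Client 'c

text \<open>Messages carry the operation number of the client operation they belong to.\<close>
datatype ('c,'e) payload =
    QTag nat
  | RTag nat "('c,'e) entry"
  | PutReq nat "('c,'e) entry"
  | Ack nat
  | QData nat
  | RData nat "('c,'e) entry set"

type_synonym ('n,'c,'e) msg = "('n,'c) proc \<times> ('n,'c) proc \<times> ('c,'e) payload"

fun entries_of :: "('c,'e) payload \<Rightarrow> ('c,'e) entry set" where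
  "entries_of (RTag m x) = {x}"
| "entries_of (PutReq m x) = {x}"
| "entries_of (RData m S) = S"
| "entries_of _ = {}"

datatype ('n,'c,'v,'e) phase =
    Idle
  | Crashed
  | WGetTag 'v "'n \<Rightarrow> ('c,'e) entry option"   \<comment> \<open>write: get-tag, replies so far\<close>
  | WPut "'c tag" "'n set"                     \<comment> \<open>write: put-data, acks so far\<close>
  | RGetData "'n \<Rightarrow> ('c,'e) entry set option" \<comment> \<open>read: get-data, replies so far\<close>
  | RPut "'c tag" 'v "'n set"                  \<comment> \<open>read: put-data, acks so far\<close>

record ('n,'c,'v,'e) gstate =
  nodeList :: "'n \<Rightarrow> ('c,'e) entry set"
  cl       :: "'c \<Rightarrow> nat \<times> ('n,'c,'v,'e) phase" \<comment> \<open>op counter and phase of each client\<close>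
  net      :: "('n,'c,'e) msg set"
  sigs     :: "('c,'e) entry set"                 \<comment> \<open>all validly signed triples\<close>

datatype ('c,'v) label =
    InvokeW 'c nat 'v
  | InvokeR 'c nat
  | PutData 'c nat "'c tag" 'v
  | Respond 'c nat
  | Tau

definition quorum_size :: "nat \<Rightarrow> nat \<Rightarrow> nat" where
  "quorum_size n k = nat \<lceil>(2 * real n + real k) / 3\<rceil>"

text \<open>Update of a List on receipt of a put-data message.\<close>
definition prune :: "nat \<Rightarrow> ('c::linorder,'e) entry set \<Rightarrow> ('c,'e) entry set" where
  "prune \<delta> L = (if card L > \<delta> + 1 then {y \<in> L. tag_of y \<noteq> Min (tag_of ` L)} else L)"

definition node_put :: "nat \<Rightarrow> ('c::linorder,'e) entry set \<Rightarrow> ('c,'e) entry \<Rightarrow> ('c,'e) entry set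
    \<Rightarrow> ('c,'e) entry set" where
  "node_put \<delta> S x L =
     prune \<delta> (if x \<in> S \<and> (\<forall>y\<in>L. tag_of y \<noteq> tag_of x) then insert x L else L)"

definition put_msgs :: "'n set \<Rightarrow> ('v \<Rightarrow> 'n \<Rightarrow> 'e) \<Rightarrow> 'c \<Rightarrow> nat \<Rightarrow> 'c tag \<Rightarrow> 'v
    \<Rightarrow> ('n,'c,'e) msg set" where
  "put_msgs C enc c m t v = {(Client c, Node j, PutReq m ((t, enc v j), SigBy c)) | j. j \<in> C}"

definition put_sigs :: "'n set \<Rightarrow> ('v \<Rightarrow> 'n \<Rightarrow> 'e) \<Rightarrow> 'c \<Rightarrow> 'c tag \<Rightarrow> 'v \<Rightarrow> ('c,'e) entry set" where
  "put_sigs C enc c t v = {((t, enc v j), SigBy c) | j. j \<in> C}"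

text \<open>Transition relation.  Parameters: set of flexnodes C, set of Byzantine flexnodes
  B, code dimension k, parameter delta, encoder and decoder.\<close>
inductive step :: "'n set \<Rightarrow> 'n set \<Rightarrow> nat \<Rightarrow> nat \<Rightarrow> ('v \<Rightarrow> 'n \<Rightarrow> 'e)
    \<Rightarrow> ('e set \<Rightarrow> 'v) \<Rightarrow> ('n,'c::linorder,'v,'e) gstate \<Rightarrow> ('c,'v) label
    \<Rightarrow> ('n,'c,'v,'e) gstate \<Rightarrow> bool"
  for C B k \<delta> enc dec where
  invoke_write:
  "cl s c = (m, Idle) \<Longrightarrow>
   step C B k \<delta> enc dec s (InvokeW c (Suc m) v)
     (s\<lparr>cl := (cl s)(c := (Suc m, WGetTag v Map.empty)),
        net := net s \<union> {(Client c, Node j, QTag (Suc m)) | j. j \<in> C}\<rparr>)"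
| invoke_read:
  "cl s c = (m, Idle) \<Longrightarrow>
   step C B k \<delta> enc dec s (InvokeR c (Suc m))
     (s\<lparr>cl := (cl s)(c := (Suc m, RGetData Map.empty)),
        net := net s \<union> {(Client c, Node j, QData (Suc m)) | j. j \<in> C}\<rparr>)"
| crash:
  "cl s c = (m, ph) \<Longrightarrow> ph \<noteq> Crashed \<Longrightarrow>
   step C B k \<delta> enc dec s Tau (s\<lparr>cl := (cl s)(c := (m, Crashed))\<rparr>)"
| node_qtag:
  "(Client c, Node j, QTag m) \<in> net s \<Longrightarrow> j \<in> C - B \<Longrightarrow>
   x \<in> nodeList s j \<Longrightarrow> (\<forall>y\<in>nodeList s j. tag_of y \<le> tag_of x) \<Longrightarrow>
   step C B k \<delta> enc dec s Tau
     (s\<lparr>net := insert (Node j, Client c, RTag m x) (net s - {(Client c, Node j, QTag m)})\<rparr>)"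
| node_qdata:
  "(Client c, Node j, QData m) \<in> net s \<Longrightarrow> j \<in> C - B \<Longrightarrow>
   step C B k \<delta> enc dec s Tau
     (s\<lparr>net := insert (Node j, Client c, RData m (nodeList s j))
                  (net s - {(Client c, Node j, QData m)})\<rparr>)"
| node_put:
  "(Client c, Node j, PutReq m x) \<in> net s \<Longrightarrow> j \<in> C - B \<Longrightarrow>
   step C B k \<delta> enc dec s Tau
     (s\<lparr>nodeList := (nodeList s)(j := node_put \<delta> (sigs s) x (nodeList s j)),
        net := insert (Node j, Client c, Ack m) (net s - {(Client c, Node j, PutReq m x)})\<rparr>)"
  \<comment> \<open>a Byzantine flexnode sends an arbitrary message from itself (authenticated
      channels), containing only validly signed triples (unforgeability)\<close>
| byz_send:
  "j \<in> B \<Longrightarrow> entries_of p \<subseteq> sigs s \<Longrightarrow>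
   step C B k \<delta> enc dec s Tau (s\<lparr>net := insert (Node j, dst, p) (net s)\<rparr>)"
| byz_recv:
  "(src, Node j, p) \<in> net s \<Longrightarrow> j \<in> B \<Longrightarrow>
   step C B k \<delta> enc dec s Tau (s\<lparr>net := net s - {(src, Node j, p)}\<rparr>)"
| client_rtag:
  "(Node j, Client c, RTag m x) \<in> net s \<Longrightarrow> cl s c = (m, WGetTag v R) \<Longrightarrow>
   j \<in> C \<Longrightarrow> R j = None \<Longrightarrow>
   step C B k \<delta> enc dec s Tau
     (s\<lparr>cl := (cl s)(c := (m, WGetTag v (R(j \<mapsto> x)))),
        net := net s - {(Node j, Client c, RTag m x)}\<rparr>)"
| client_tag_done:
  "cl s c = (m, WGetTag v R) \<Longrightarrow> card (dom R) \<ge> quorum_size (card C) k \<Longrightarrow>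
   t \<in> {tag_of x | x. x \<in> ran R \<and> x \<in> sigs s} \<Longrightarrow>
   (\<forall>x \<in> ran R. x \<in> sigs s \<longrightarrow> tag_of x \<le> t) \<Longrightarrow>
   t' = (Suc (fst t), c) \<Longrightarrow>
   step C B k \<delta> enc dec s (PutData c m t' v)
     (s\<lparr>cl := (cl s)(c := (m, WPut t' {})),
        net := net s \<union> put_msgs C enc c m t' v,
        sigs := sigs s \<union> put_sigs C enc c t' v\<rparr>)"
| client_ack_w:
  "(Node j, Client c, Ack m) \<in> net s \<Longrightarrow> cl s c = (m, WPut t A) \<Longrightarrow> j \<in> C \<Longrightarrow>
   step C B k \<delta> enc dec s Tau
     (s\<lparr>cl := (cl s)(c := (m, WPut t (insert j A))),
        net := net s - {(Node j, Client c, Ack m)}\<rparr>)"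
| client_write_done:
  "cl s c = (m, WPut t A) \<Longrightarrow> card A \<ge> quorum_size (card C) k \<Longrightarrow>
   step C B k \<delta> enc dec s (Respond c m) (s\<lparr>cl := (cl s)(c := (m, Idle))\<rparr>)"
| client_rdata:
  "(Node j, Client c, RData m L) \<in> net s \<Longrightarrow> cl s c = (m, RGetData R) \<Longrightarrow>
   j \<in> C \<Longrightarrow> R j = None \<Longrightarrow>
   step C B k \<delta> enc dec s Tau
     (s\<lparr>cl := (cl s)(c := (m, RGetData (R(j \<mapsto> L)))),
        net := net s - {(Node j, Client c, RData m L)}\<rparr>)"
| client_data_done:
  "cl s c = (m, RGetData R) \<Longrightarrow> card (dom R) \<ge> quorum_size (card C) k \<Longrightarrow>
   T = {t. card {j \<in> dom R. \<exists>x \<in> the (R j). x \<in> sigs s \<and> tag_of x = t} \<ge> k} \<Longrightarrow>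
   t \<in> T \<Longrightarrow> (\<forall>t'\<in>T. t' \<le> t) \<Longrightarrow>
   v = dec {e. \<exists>j \<in> dom R. \<exists>\<sigma>. ((t, e), \<sigma>) \<in> the (R j) \<and> ((t, e), \<sigma>) \<in> sigs s} \<Longrightarrow>
   step C B k \<delta> enc dec s (PutData c m t v)
     (s\<lparr>cl := (cl s)(c := (m, RPut t v {})),
        net := net s \<union> put_msgs C enc c m t v,
        sigs := sigs s \<union> put_sigs C enc c t v\<rparr>)"
| client_ack_r:
  "(Node j, Client c, Ack m) \<in> net s \<Longrightarrow> cl s c = (m, RPut t v A) \<Longrightarrow> j \<in> C \<Longrightarrow>
   step C B k \<delta> enc dec s Tau
     (s\<lparr>cl := (cl s)(c := (m, RPut t v (insert j A))),
        net := net s - {(Node j, Client c, Ack m)}\<rparr>)"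
| client_read_done:
  "cl s c = (m, RPut t v A) \<Longrightarrow> card A \<ge> quorum_size (card C) k \<Longrightarrow>
   step C B k \<delta> enc dec s (Respond c m) (s\<lparr>cl := (cl s)(c := (m, Idle))\<rparr>)"

definition init_state :: "'n set \<Rightarrow> ('v \<Rightarrow> 'n \<Rightarrow> 'e) \<Rightarrow> 'c tag \<Rightarrow> 'v \<Rightarrow> ('n,'c,'v,'e) gstate" where
  "init_state C enc t0 v0 =
     \<lparr>nodeList = (\<lambda>j. {((t0, enc v0 j), SigInit)}),
      cl = (\<lambda>c. (0, Idle)),
      net = {},
      sigs = {((t0, enc v0 j), SigInit) | j. j \<in> C}\<rparr>"

definition execution :: "'n set \<Rightarrow> 'n set \<Rightarrow> nat \<Rightarrow> nat \<Rightarrow> ('v \<Rightarrow> 'n \<Rightarrow> 'e)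
    \<Rightarrow> ('e set \<Rightarrow> 'v) \<Rightarrow> 'c::linorder tag \<Rightarrow> 'v
    \<Rightarrow> ('n,'c,'v,'e) gstate list \<Rightarrow> ('c,'v) label list \<Rightarrow> bool" where
  "execution C B k \<delta> enc dec t0 v0 ss ls \<longleftrightarrow>
     length ss = Suc (length ls) \<and> ss ! 0 = init_state C enc t0 v0 \<and>
     (\<forall>i < length ls. step C B k \<delta> enc dec (ss ! i) (ls ! i) (ss ! Suc i))"

definition mds_code :: "'n set \<Rightarrow> nat \<Rightarrow> ('v \<Rightarrow> 'n \<Rightarrow> 'e) \<Rightarrow> ('e set \<Rightarrow> 'v) \<Rightarrow> bool" where
  "mds_code C k enc dec \<longleftrightarrow> 1 \<le> k \<and> k \<le> card C \<and>
     (\<forall>v S. S \<subseteq> C \<longrightarrow> card S \<ge> k \<longrightarrow> dec (enc v ` S) = v)"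

end

theory Submission
  imports Defs
begin

text \<open>
  When operation \<pi> with tag t completes its put-data, a quorum of flexnodes has
  acknowledged it, and an honest flexnode acknowledges only after storing a signed entry
  with tag at least t.  The maximal tag stored at a node never decreases: pruning only
  removes the entries of the minimal tag, and the tags within a List are distinct.  The
  get-tag phase of the later write \<omega> collects replies from a second quorum; since
  3b < |C| - k, the two quorums share an honest node, whose reply is sent after \<pi> has
  completed and hence carries a signed tag at least t.  So \<omega> increments the first
  component of a tag at least t.
\<close>

declare split_paired_All [simp del] split_paired_Ex [simp del]

definition has_tag_ge :: "('c::linorder,'e) entry set \<Rightarrow> 'c tag \<Rightarrow> bool" where
  "has_tag_ge L t \<longleftrightarrow> (\<exists>x\<in>L. t \<le> tag_of x)"

lemma prune_subset: "prune \<delta> L \<subseteq> L"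
  by (auto simp: prune_def)

lemma has_tag_ge_prune:
  fixes L :: "('c::linorder,'e) entry set"
  assumes inj: "inj_on tag_of L" and "has_tag_ge L t"
  shows "has_tag_ge (prune \<delta> L) t"
proof (cases "card L > \<delta> + 1")
  case False
  then show ?thesis using assms(2) by (simp add: prune_def)
next
  case big: True
  then have fin: "finite L" using card.infinite by fastforce
  obtain y where y: "y \<in> L" "t \<le> tag_of y" using assms(2) by (auto simp: has_tag_ge_def)
  have "L - {y} \<noteq> {}"
  proof
    assume "L - {y} = {}"
    then have "card L \<le> 1" using card_mono[of "{y}" L] by (simp add: subset_singleton_iff)
    then show False using big by simp
  qed
  then obtain z where "z \<in> L" "z \<noteq> y" by blast
  then have z: "z \<in> L" "tag_of z \<noteq> tag_of y" using inj y(1) by (metis inj_onD)+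
  show ?thesis
  proof (cases "tag_of y = Min (tag_of ` L)")
    case True
    then have "t \<le> tag_of z" using y(2) z(1) fin by (metis Min_le finite_imageI image_eqI order_trans)
    then show ?thesis using z big True by (auto simp: has_tag_ge_def prune_def)
  next
    case False
    then show ?thesis using y big by (auto simp: has_tag_ge_def prune_def)
  qed
qed

lemma node_put_subset: "node_put \<delta> S x L \<subseteq> L \<union> ({x} \<inter> S)"
  using prune_subset[of \<delta> "insert x L"] prune_subset[of \<delta> L]
  by (auto simp: node_put_def split: if_splits)

lemma inj_on_tag_of_node_put: "inj_on tag_of L \<Longrightarrow> inj_on tag_of (node_put \<delta> S x L)"
  unfolding node_put_def by (rule inj_on_subset[OF _ prune_subset]) (auto simp: inj_on_def)

lemma has_tag_ge_node_put:
  assumes inj: "inj_on tag_of L" and t: "has_tag_ge L t \<or> (x \<in> S \<and> t \<le> tag_of x)"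
  shows "has_tag_ge (node_put \<delta> S x L) t"
proof -
  define L' where "L' = (if x \<in> S \<and> (\<forall>y\<in>L. tag_of y \<noteq> tag_of x) then insert x L else L)"
  have "inj_on tag_of L'" using inj by (auto simp: L'_def inj_on_def)
  moreover have "has_tag_ge L' t"
  proof (cases "x \<in> S \<and> (\<forall>y\<in>L. tag_of y \<noteq> tag_of x)")
    case True
    then show ?thesis using t by (auto simp: L'_def has_tag_ge_def)
  next
    case False
    then show ?thesis using t unfolding L'_def has_tag_ge_def by (metis (full_types))
  qed
  ultimately show ?thesis unfolding node_put_def L'_def[symmetric] by (rule has_tag_ge_prune)
qed

definition querying :: "('n,'c,'v,'e) phase \<Rightarrow> bool" where
  "querying ph \<longleftrightarrow> (case ph of WGetTag _ _ \<Rightarrow> True | RGetData _ \<Rightarrow> True | _ \<Rightarrow> False)"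

text \<open>Lexicographically ordered progress of a client: its operation m is at stage
  (m, False) while querying and at (m, True) once its put-data has started.\<close>

definition stage :: "nat \<times> ('n,'c,'v,'e) phase \<Rightarrow> nat \<times> bool" where
  "stage cs = (fst cs, \<not> querying (snd cs))"

lemma step_stage_mono:
  "step C B k \<delta> enc dec s l s' \<Longrightarrow> stage (cl s c) \<le> stage (cl s' c)"
  by (cases rule: step.cases) (auto simp: stage_def querying_def less_eq_prod_def split: if_splits)

fun responders :: "('n,'c,'v,'e) phase \<Rightarrow> 'n set" where
  "responders (WGetTag v R) = dom R"
| "responders (RGetData R) = dom R"
| "responders (WPut t A) = A"
| "responders (RPut t v A) = A"
| "responders _ = {}"

text \<open>A message of operation m is in transit only once its client has reached the phase
  that sends or triggers it.  Hence a query or put-data phase starts with no stale replies or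
  acknowledgements from honest flexnodes.\<close>

fun msg_current :: "'n set \<Rightarrow> ('c \<Rightarrow> nat \<times> ('n,'c,'v,'e) phase) \<Rightarrow> ('n,'c,'e) msg \<Rightarrow> bool" where
  "msg_current B f (Client c, _, QTag m) = ((m, False) \<le> stage (f c))"
| "msg_current B f (Client c, _, PutReq m _) = ((m, True) \<le> stage (f c))"
| "msg_current B f (Node j, Client c, RTag m _) = (j \<notin> B \<longrightarrow> (m, False) \<le> stage (f c))"
| "msg_current B f (Node j, Client c, Ack m) = (j \<notin> B \<longrightarrow> (m, True) \<le> stage (f c))"
| "msg_current B f _ = True"

lemma msg_current_mono:
  "(\<And>c. stage (f c) \<le> stage (g c)) \<Longrightarrow> msg_current B f msg \<Longrightarrow> msg_current B g msg"
  by (induction B f msg rule: msg_current.induct) (auto intro: order_trans)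

definition reach_inv :: "'n set \<Rightarrow> 'n set \<Rightarrow> ('n,'c::linorder,'v,'e) gstate \<Rightarrow> bool" where
  "reach_inv C B s \<longleftrightarrow>
     (\<forall>j\<in>C. nodeList s j \<subseteq> sigs s) \<and> (\<forall>j. inj_on tag_of (nodeList s j)) \<and>
     (\<forall>msg\<in>net s. msg_current B (cl s) msg) \<and> (\<forall>c. responders (snd (cl s c)) \<subseteq> C)"

lemma step_nodeList:
  assumes "step C B k \<delta> enc dec s l s'"
  obtains "nodeList s' = nodeList s"
  | j x where "nodeList s' = (nodeList s)(j := node_put \<delta> (sigs s) x (nodeList s j))"
  using assms by (cases rule: step.cases) auto

lemma step_sigs_mono: "step C B k \<delta> enc dec s l s' \<Longrightarrow> sigs s \<subseteq> sigs s'"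
  by (cases rule: step.cases) auto

lemma step_responders:
  "step C B k \<delta> enc dec s l s' \<Longrightarrow> responders (snd (cl s' c)) \<subseteq> responders (snd (cl s c)) \<union> C"
  by (cases rule: step.cases) (auto split: if_splits)

lemma reach_inv_init: "reach_inv C B (init_state C enc t0 v0)"
  by (auto simp: reach_inv_def init_state_def)

lemma step_msg_current:
  assumes st: "step C B k \<delta> enc dec s l s'" and cur: "\<forall>msg\<in>net s. msg_current B (cl s) msg"
  shows "\<forall>msg\<in>net s'. msg_current B (cl s') msg"
proof -
  have "\<And>c. stage (cl s c) \<le> stage (cl s' c)" using step_stage_mono[OF st] .
  then have old: "\<forall>msg\<in>net s. msg_current B (cl s') msg"
    using cur msg_current_mono by blast
  from st show ?thesis
  proof (cases rule: step.cases)
    case (node_qtag c j m x)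
    then have "msg_current B (cl s) (Client c, Node j, QTag m)" using cur by blast
    then show ?thesis using old node_qtag by auto
  next
    case (node_put c j m x)
    then have "msg_current B (cl s) (Client c, Node j, PutReq m x)" using cur by blast
    then show ?thesis using old node_put by auto
  next
    case (byz_send j p dst)
    then show ?thesis using old by (cases dst; cases p) auto
  qed (use old in \<open>auto simp: put_msgs_def stage_def querying_def\<close>)
qed

lemma reach_inv_step:
  assumes st: "step C B k \<delta> enc dec s l s'" and inv: "reach_inv C B s"
  shows "reach_inv C B s'"
proof -
  have msgs: "\<forall>msg\<in>net s'. msg_current B (cl s') msg"
    using step_msg_current[OF st] inv by (simp add: reach_inv_def)
  have resp: "\<forall>c. responders (snd (cl s' c)) \<subseteq> C"
    using step_responders[OF st] inv by (fastforce simp: reach_inv_def)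
  have lists: "(\<forall>j\<in>C. nodeList s' j \<subseteq> sigs s') \<and> (\<forall>j. inj_on tag_of (nodeList s' j))"
    using st
  proof (cases rule: step_nodeList)
    case 1
    then show ?thesis using inv step_sigs_mono[OF st] by (auto simp: reach_inv_def)
  next
    case (2 j x)
    then show ?thesis
      using inv step_sigs_mono[OF st] node_put_subset[of \<delta> "sigs s" x "nodeList s j"]
        inj_on_tag_of_node_put[of "nodeList s j" \<delta> "sigs s" x]
      by (auto simp: reach_inv_def)
  qed
  show ?thesis using msgs resp lists by (simp add: reach_inv_def)
qed

lemma has_tag_ge_step:
  assumes st: "step C B k \<delta> enc dec s l s'" and inv: "reach_inv C B s"
    and t: "has_tag_ge (nodeList s g) t"
  shows "has_tag_ge (nodeList s' g) t"
  using st
proof (cases rule: step_nodeList)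
  case 1
  then show ?thesis using t by simp
next
  case (2 j x)
  then show ?thesis
    using t has_tag_ge_node_put[of "nodeList s g" t x "sigs s" \<delta>] inv by (auto simp: reach_inv_def)
qed

lemma execution_step:
  "execution C B k \<delta> enc dec t0 v0 ss ls \<Longrightarrow> i < length ls \<Longrightarrow>
     step C B k \<delta> enc dec (ss ! i) (ls ! i) (ss ! Suc i)"
  by (simp add: execution_def)

lemma execution_reach_inv:
  assumes ex: "execution C B k \<delta> enc dec t0 v0 ss ls"
  shows "i \<le> length ls \<Longrightarrow> reach_inv C B (ss ! i)"
proof (induction i)
  case 0
  then show ?case using ex reach_inv_init by (simp add: execution_def)
next
  case (Suc i)
  then have "i < length ls" by simp
  then show ?case using Suc.IH reach_inv_step execution_step[OF ex] by (metis less_imp_le_nat)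
qed

lemma execution_responders:
  assumes "execution C B k \<delta> enc dec t0 v0 ss ls" "i \<le> length ls"
  shows "responders (snd (cl (ss ! i) c)) \<subseteq> C"
  using execution_reach_inv[OF assms] unfolding reach_inv_def by blast

lemma execution_induct [consumes 3, case_names base step]:
  assumes ex: "execution C B k \<delta> enc dec t0 v0 ss ls"
    and "a \<le> b" "b \<le> length ls"
    and P0: "P (ss ! a)"
    and preserve: "\<And>i. a \<le> i \<Longrightarrow> i < length ls \<Longrightarrow> reach_inv C B (ss ! i) \<Longrightarrow>
       step C B k \<delta> enc dec (ss ! i) (ls ! i) (ss ! Suc i) \<Longrightarrow> P (ss ! i) \<Longrightarrow> P (ss ! Suc i)"
  shows "P (ss ! b)"
  using \<open>a \<le> b\<close> \<open>b \<le> length ls\<close>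
proof (induction b rule: dec_induct)
  case base
  show ?case by (rule P0)
next
  case (step i)
  then show ?case using execution_reach_inv[OF ex] execution_step[OF ex] preserve by simp
qed

lemma execution_stage_mono:
  assumes "execution C B k \<delta> enc dec t0 v0 ss ls" "a \<le> b" "b \<le> length ls"
  shows "stage (cl (ss ! a) c) \<le> stage (cl (ss ! b) c)"
  using assms
proof (induction rule: execution_induct)
  case (step i)
  then show ?case using step_stage_mono order_trans by blast
qed simp

lemma execution_has_tag_ge_mono:
  assumes "execution C B k \<delta> enc dec t0 v0 ss ls" "a \<le> b" "b \<le> length ls"
    and "has_tag_ge (nodeList (ss ! a) g) t"
  shows "has_tag_ge (nodeList (ss ! b) g) t"
  using assms(1-3)
proof (induction rule: execution_induct)
  case base
  show ?case by (rule assms(4))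
next
  case (step i)
  then show ?case by (blast intro: has_tag_ge_step)
qed

lemma tag_less_next: "(t::'c::linorder tag) \<le> t' \<Longrightarrow> t < (Suc (fst t'), c)"
  by (cases t; cases t') (auto simp: less_eq_prod_def less_prod_def)

lemma quorums_share_honest:
  fixes A D B C :: "'n set"
  assumes "finite C" "A \<subseteq> C" "D \<subseteq> C" "B \<subseteq> C"
    and "quorum_size (card C) k \<le> card A" "quorum_size (card C) k \<le> card D"
    and "real (card B) < (real (card C) - real k) / 3"
  shows "\<exists>g\<in>A \<inter> D. g \<notin> B"
proof (rule ccontr)
  assume "\<not> ?thesis"
  then have "card (A \<inter> D) \<le> card B"
    using assms(1,4) by (intro card_mono) (auto intro: finite_subset)
  moreover have "card A + card D = card (A \<union> D) + card (A \<inter> D)"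
    using assms(1-3) by (intro card_Un_Int) (auto intro: finite_subset)
  moreover have "card (A \<union> D) \<le> card C"
    using assms(1-3) by (intro card_mono) auto
  ultimately have "2 * real (quorum_size (card C) k) \<le> real (card C) + real (card B)"
    using assms(5,6) by linarith
  moreover have "(2 * real (card C) + real k) / 3 \<le> real (quorum_size (card C) k)"
    unfolding quorum_size_def by linarith
  ultimately show False using assms(7) by (simp add: field_simps)
qed

inductive_cases step_PutDataE: "step C B k \<delta> enc dec s (PutData c m t v) s'"
inductive_cases step_RespondE: "step C B k \<delta> enc dec s (Respond c m) s'"
inductive_cases step_InvokeWE: "step C B k \<delta> enc dec s (InvokeW c m v) s'"

lemma step_PutData:
  assumes "step C B k \<delta> enc dec s (PutData c m t v) s'"
  shows "stage (cl s c) = (m, False)"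
    and "cl s' c = (m, WPut t {}) \<or> cl s' c = (m, RPut t v {})"
    and "net s' = net s \<union> put_msgs C enc c m t v"
    and "sigs s' = sigs s \<union> put_sigs C enc c t v"
  using assms by (auto elim: step_PutDataE simp: stage_def querying_def)

lemma step_PutData_cases:
  assumes "step C B k \<delta> enc dec s (PutData c m t v) s'"
  obtains (get_tag_done) R t\<^sub>m where "cl s c = (m, WGetTag v R)"
      "quorum_size (card C) k \<le> card (dom R)" "\<forall>x\<in>ran R. x \<in> sigs s \<longrightarrow> tag_of x \<le> t\<^sub>m"
      "t = (Suc (fst t\<^sub>m), c)"
  | (get_data_done) R where "cl s c = (m, RGetData R)"
  using assms
proof (cases rule: step.cases)
  case (client_tag_done R t\<^sub>m)
  then show ?thesis using get_tag_done by blast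
next
  case (client_data_done R)
  then show ?thesis using get_data_done by blast
qed

definition put_phase_inv :: "'n set \<Rightarrow> 'c tag \<Rightarrow> ('n,'c::linorder,'v,'e) gstate \<Rightarrow> ('n,'c,'v,'e) phase \<Rightarrow> bool" where
  "put_phase_inv B t s ph \<longleftrightarrow> (case ph of
       WPut t' A \<Rightarrow> t' = t \<and> (\<forall>j\<in>A - B. has_tag_ge (nodeList s j) t)
     | RPut t' v A \<Rightarrow> t' = t \<and> (\<forall>j\<in>A - B. has_tag_ge (nodeList s j) t)
     | Idle \<Rightarrow> True
     | Crashed \<Rightarrow> True
     | _ \<Rightarrow> False)"

definition put_data_inv :: "'n set \<Rightarrow> 'c \<Rightarrow> nat \<Rightarrow> 'c tag \<Rightarrow> ('n,'c::linorder,'v,'e) gstate \<Rightarrow> bool" where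
  "put_data_inv B c n t s \<longleftrightarrow> n \<le> fst (cl s c) \<and>
     (fst (cl s c) = n \<longrightarrow> put_phase_inv B t s (snd (cl s c))) \<and>
     (\<forall>dst x. (Client c, dst, PutReq n x) \<in> net s \<longrightarrow> x \<in> sigs s \<and> tag_of x = t) \<and>
     (\<forall>j. j \<notin> B \<longrightarrow> (Node j, Client c, Ack n) \<in> net s \<longrightarrow> has_tag_ge (nodeList s j) t)"

lemma put_data_inv_start:
  assumes st: "step C B k \<delta> enc dec s (PutData c n t v) s'" and inv: "reach_inv C B s"
  shows "put_data_inv B c n t s'"
proof -
  note querying = step_PutData(1)[OF st] and phase = step_PutData(2)[OF st]
    and net = step_PutData(3)[OF st] and sigs = step_PutData(4)[OF st]
  have "msg_current B (cl s) msg" if "msg \<in> net s" for msg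
    using inv that by (simp add: reach_inv_def)
  then have no_put: "(Client c, dst, PutReq n x) \<notin> net s"
    and no_ack: "j \<notin> B \<Longrightarrow> (Node j, Client c, Ack n) \<notin> net s" for dst x j
    using querying by (fastforce simp: less_eq_prod_def)+
  from phase have "n \<le> fst (cl s' c) \<and> (fst (cl s' c) = n \<longrightarrow> put_phase_inv B t s' (snd (cl s' c)))"
    by (elim disjE) (simp_all add: put_phase_inv_def)
  then show ?thesis
    using no_put no_ack
    by (auto simp: put_data_inv_def net sigs put_msgs_def put_sigs_def tag_of_def)
qed

lemma put_data_inv_step:
  assumes st: "step C B k \<delta> enc dec s l s'" and inv: "reach_inv C B s"
    and P: "put_data_inv B c n t s"
  shows "put_data_inv B c n t s'"
  using st
proof (cases rule: step.cases)
  case (node_put c0 j m x)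
  have keep: "has_tag_ge (nodeList s' g) t" if "has_tag_ge (nodeList s g) t" for g
    using has_tag_ge_step[OF st inv that] .
  have stored: "has_tag_ge (nodeList s' j) t" if "c0 = c" "m = n"
  proof -
    have "x \<in> sigs s" "tag_of x = t" using P node_put that by (auto simp: put_data_inv_def)
    then show ?thesis
      using has_tag_ge_node_put[of "nodeList s j" t x "sigs s" \<delta>] inv node_put
      by (auto simp: reach_inv_def)
  qed
  have "put_phase_inv B t s' ph" if "put_phase_inv B t s ph" for ph
    using that keep by (auto simp: put_phase_inv_def split: phase.splits)
  then show ?thesis using P stored keep node_put by (auto simp: put_data_inv_def)
qed (use P in \<open>auto simp: put_data_inv_def put_phase_inv_def put_msgs_def put_sigs_def split: phase.splits\<close>)

lemma completed_put_data_quorum: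
  assumes ex: "execution C B k \<delta> enc dec t0 v0 ss ls"
    and p: "p < length ls" "ls ! p = PutData c n t v"
    and i: "i < length ls" "ls ! i = Respond c n"
  obtains A where "A \<subseteq> C" "quorum_size (card C) k \<le> card A"
    "\<forall>g\<in>A - B. has_tag_ge (nodeList (ss ! i) g) t"
proof -
  have put: "step C B k \<delta> enc dec (ss ! p) (PutData c n t v) (ss ! Suc p)"
    using execution_step[OF ex p(1)] p(2) by simp
  have resp: "step C B k \<delta> enc dec (ss ! i) (Respond c n) (ss ! Suc i)"
    using execution_step[OF ex i(1)] i(2) by simp
  have "p < i"
  proof (rule ccontr)
    assume "\<not> p < i"
    with p(2) i(2) have "Suc i \<le> p" by (cases "p = i") auto
    then have "stage (cl (ss ! Suc i) c) \<le> stage (cl (ss ! p) c)"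
      using execution_stage_mono[OF ex] p(1) by simp
    moreover have "stage (cl (ss ! Suc i) c) = (n, True)"
      using resp by (cases rule: step_RespondE) (auto simp: stage_def querying_def)
    moreover have "stage (cl (ss ! p) c) = (n, False)" using step_PutData(1)[OF put] .
    ultimately show False by simp
  qed
  have "put_data_inv B c n t (ss ! i)"
    using ex Suc_leI[OF \<open>p < i\<close>] less_imp_le[OF i(1)]
  proof (induction rule: execution_induct)
    case base
    show ?case using put_data_inv_start[OF put execution_reach_inv[OF ex]] p(1) by simp
  next
    case (step i)
    then show ?case using put_data_inv_step by blast
  qed
  moreover obtain A where A: "quorum_size (card C) k \<le> card A"
    "(\<exists>t'. cl (ss ! i) c = (n, WPut t' A)) \<or> (\<exists>t' v'. cl (ss ! i) c = (n, RPut t' v' A))"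
    using resp by (cases rule: step_RespondE) auto
  moreover have "A \<subseteq> C"
    using A(2) execution_responders[OF ex, of i c] i(1) by auto
  ultimately show ?thesis using that by (auto simp: put_data_inv_def put_phase_inv_def)
qed

text \<open>Operation n of client c is a write, so its read phases are excluded.\<close>

definition get_tag_phase_inv :: "'n set \<Rightarrow> 'c tag \<Rightarrow> ('n,'c::linorder,'v,'e) gstate \<Rightarrow> ('n,'c,'v,'e) phase \<Rightarrow> bool" where
  "get_tag_phase_inv G t s ph \<longleftrightarrow> (case ph of
       WGetTag v R \<Rightarrow> (\<forall>j\<in>G. \<forall>x. R j = Some x \<longrightarrow> x \<in> sigs s \<and> t \<le> tag_of x)
     | RGetData R \<Rightarrow> False
     | RPut t' v A \<Rightarrow> False
     | _ \<Rightarrow> True)"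

definition get_tag_inv :: "'n set \<Rightarrow> 'c \<Rightarrow> nat \<Rightarrow> 'c tag \<Rightarrow> ('n,'c::linorder,'v,'e) gstate \<Rightarrow> bool" where
  "get_tag_inv G c n t s \<longleftrightarrow> n \<le> fst (cl s c) \<and> (\<forall>j\<in>G. has_tag_ge (nodeList s j) t) \<and>
     (\<forall>j\<in>G. \<forall>x. (Node j, Client c, RTag n x) \<in> net s \<longrightarrow> x \<in> sigs s \<and> t \<le> tag_of x) \<and>
     (fst (cl s c) = n \<longrightarrow> get_tag_phase_inv G t s (snd (cl s c)))"

lemma get_tag_inv_start:
  assumes st: "step C B k \<delta> enc dec s (InvokeW c n v) s'" and inv: "reach_inv C B s"
    and G: "G \<inter> B = {}" and t: "\<forall>g\<in>G. has_tag_ge (nodeList s g) t"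
  shows "get_tag_inv G c n t s'"
proof -
  from st obtain m where idle: "cl s c = (m, Idle)" and n: "n = Suc m"
    and s': "s' = s\<lparr>cl := (cl s)(c := (n, WGetTag v Map.empty)),
               net := net s \<union> {(Client c, Node j, QTag n) | j. j \<in> C}\<rparr>"
    by (cases rule: step_InvokeWE) auto
  have "msg_current B (cl s) msg" if "msg \<in> net s" for msg
    using inv that by (simp add: reach_inv_def)
  then have "(Node j, Client c, RTag n x) \<notin> net s" if "j \<in> G" for j x
    using that G idle n by (fastforce simp: stage_def less_eq_prod_def)
  then show ?thesis using t by (auto simp: get_tag_inv_def get_tag_phase_inv_def s')
qed

lemma get_tag_inv_step:
  assumes st: "step C B k \<delta> enc dec s l s'" and inv: "reach_inv C B s"
    and G: "G \<inter> B = {}" and P: "get_tag_inv G c n t s"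
  shows "get_tag_inv G c n t s'"
  using st
proof (cases rule: step.cases)
  case (node_put c0 j m x)
  have "get_tag_phase_inv G t s' ph" if "get_tag_phase_inv G t s ph" for ph
    using that node_put by (auto simp: get_tag_phase_inv_def split: phase.splits)
  then show ?thesis using P has_tag_ge_step[OF st inv] node_put by (auto simp: get_tag_inv_def)
next
  case (node_qtag c0 j m x)
  have "x \<in> sigs s \<and> t \<le> tag_of x" if jG: "j \<in> G"
  proof -
    have "x \<in> sigs s" using inv node_qtag by (auto simp: reach_inv_def)
    moreover obtain y where "y \<in> nodeList s j" "t \<le> tag_of y"
      using P jG by (auto simp: get_tag_inv_def has_tag_ge_def)
    then have "t \<le> tag_of x" using node_qtag order_trans by blast
    ultimately show ?thesis ..
  qed
  moreover have "get_tag_phase_inv G t s' ph" if "get_tag_phase_inv G t s ph" for ph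
    using that node_qtag by (auto simp: get_tag_phase_inv_def split: phase.splits)
  ultimately show ?thesis using P node_qtag by (auto simp: get_tag_inv_def)
qed (use P G in \<open>auto simp: get_tag_inv_def get_tag_phase_inv_def put_msgs_def put_sigs_def split: phase.splits\<close>)

lemma write_tag_exceeds_quorum:
  assumes ex: "execution C B k \<delta> enc dec t0 v0 ss ls"
    and j: "j < length ls" "ls ! j = InvokeW c n v"
    and q: "q < length ls" "ls ! q = PutData c n t' v'"
    and G: "G \<inter> B = {}" "\<forall>g\<in>G. has_tag_ge (nodeList (ss ! j) g) t"
  obtains D where "D \<subseteq> C" "quorum_size (card C) k \<le> card D" "D \<inter> G \<noteq> {} \<longrightarrow> t < t'"
proof -
  have invoke: "step C B k \<delta> enc dec (ss ! j) (InvokeW c n v) (ss ! Suc j)"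
    using execution_step[OF ex j(1)] j(2) by simp
  have put: "step C B k \<delta> enc dec (ss ! q) (PutData c n t' v') (ss ! Suc q)"
    using execution_step[OF ex q(1)] q(2) by simp
  have "j < q"
  proof (rule ccontr)
    assume "\<not> j < q"
    then have "stage (cl (ss ! q) c) \<le> stage (cl (ss ! j) c)"
      using execution_stage_mono[OF ex] j(1) by simp
    moreover have "stage (cl (ss ! q) c) = (n, False)" using step_PutData(1)[OF put] .
    moreover obtain m where "n = Suc m" "stage (cl (ss ! j) c) = (m, True)"
      using invoke by (cases rule: step_InvokeWE) (auto simp: stage_def querying_def)
    ultimately show False by (simp add: less_eq_prod_def)
  qed
  have P: "get_tag_inv G c n t (ss ! q)"
    using ex Suc_leI[OF \<open>j < q\<close>] less_imp_le[OF q(1)]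
  proof (induction rule: execution_induct)
    case base
    show ?case using get_tag_inv_start[OF invoke execution_reach_inv[OF ex] G] j(1) by simp
  next
    case (step i)
    then show ?case using get_tag_inv_step G(1) by blast
  qed
  from put show ?thesis
  proof (cases rule: step_PutData_cases)
    case (get_tag_done R t\<^sub>m)
    have "dom R \<subseteq> C"
      using get_tag_done execution_responders[OF ex, of q c] q(1) by simp
    moreover have "t < t'" if g: "g \<in> dom R \<inter> G" for g
    proof -
      obtain x where x: "R g = Some x" using g by blast
      then have "x \<in> sigs (ss ! q)" "t \<le> tag_of x"
        using P get_tag_done g by (auto simp: get_tag_inv_def get_tag_phase_inv_def)
      moreover have "x \<in> ran R" using x by (rule ranI)
      ultimately have "t \<le> t\<^sub>m" using get_tag_done order_trans by blast
      then show ?thesis using get_tag_done tag_less_next by blast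
    qed
    ultimately show ?thesis using that get_tag_done by blast
  next
    case get_data_done
    then show ?thesis using P by (simp add: get_tag_inv_def get_tag_phase_inv_def)
  qed
qed

theorem mainTheorem6:
  fixes C B :: "'n set" and b k \<delta> :: nat
    and enc :: "'v \<Rightarrow> 'n \<Rightarrow> 'e" and dec :: "'e set \<Rightarrow> 'v"
    and t0 :: "'c::linorder tag" and v0 :: 'v
    and ss :: "('n,'c,'v,'e) gstate list" and ls :: "('c,'v) label list"
  assumes "finite C"
    and "mds_code C k enc dec"
    and "\<delta> \<ge> 1"
    and "B \<subseteq> C" and "card B \<le> b"
    and "real b < (real (card C) - real k) / 3"
    and "execution C B k \<delta> enc dec t0 v0 ss ls"
    \<comment> \<open>pi = operation number n_pi of client c_pi; omega = write number n_om of c_om\<close>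
    and "i < j" and "j < length ls"
    and "ls ! i = Respond c\<^sub>\<pi> n\<^sub>\<pi>"
    and "ls ! j = InvokeW c\<^sub>\<omega> n\<^sub>\<omega> v"
    and "p < length ls" and "ls ! p = PutData c\<^sub>\<pi> n\<^sub>\<pi> t\<^sub>\<pi> v\<^sub>\<pi>"
    and "q < length ls" and "ls ! q = PutData c\<^sub>\<omega> n\<^sub>\<omega> t\<^sub>\<omega> v\<^sub>\<omega>"
  shows "t\<^sub>\<omega> > t\<^sub>\<pi>"
proof -
  note ex = assms(7)
  obtain A where A: "A \<subseteq> C" "quorum_size (card C) k \<le> card A"
    "\<forall>g\<in>A - B. has_tag_ge (nodeList (ss ! i) g) t\<^sub>\<pi>"
    using completed_put_data_quorum[OF ex assms(12,13) _ assms(10)] assms(8,9) by auto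
  then have "\<forall>g\<in>A - B. has_tag_ge (nodeList (ss ! j) g) t\<^sub>\<pi>"
    using execution_has_tag_ge_mono[OF ex, of i j] assms(8,9) by simp
  then obtain D where D: "D \<subseteq> C" "quorum_size (card C) k \<le> card D"
    "D \<inter> (A - B) \<noteq> {} \<longrightarrow> t\<^sub>\<pi> < t\<^sub>\<omega>"
    using write_tag_exceeds_quorum[OF ex assms(9,11,14,15), of "A - B"] by blast
  have "real (card B) < (real (card C) - real k) / 3" using assms(5,6) by linarith
  then obtain g where "g \<in> A \<inter> D" "g \<notin> B"
    using quorums_share_honest[OF assms(1) A(1) D(1) assms(4) A(2) D(2)] by blast
  then show ?thesis using D(3) by blast
qed

end
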